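(* Let $a\ne0$ and let $A,B\in\mathbb R$ not both zero. Define $h:\mathbb R\to\mathbb R$, $h(x):=A\cosh(ax)\cos(ax)-B\sinh(ax)\sin(ax)$. Then the local extrema of $h$ are isolated and their absolute values are strictly increasing on the nonnegative real axis: $|h(x_1)|<|h(x_2)|$ whenever $0\le x_1<x_2$ are local extremum points of $h$. *)

theory Defs
  imports Complex_Main
begin

definition local_max_point :: "(real \<Rightarrow> real) \<Rightarrow> real \<Rightarrow> bool" where
  "local_max_point f x \<longleftrightarrow> (\<exists>e>0. \<forall>y. \<bar>y - x\<bar> < e \<longrightarrow> f y \<le> f x)"

definition local_min_point :: "(real \<Rightarrow> real) \<Rightarrow> real \<Rightarrow> bool" where
  "local_min_point f x \<longleftrightarrow> (\<exists>e>0. \<forall>y. \<bar>y - x\<bar> < e \<longrightarrow> f x \<le> f y)"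

definition local_extremum_point :: "(real \<Rightarrow> real) \<Rightarrow> real \<Rightarrow> bool" where
  "local_extremum_point f x \<longleftrightarrow> local_max_point f x \<or> local_min_point f x"

end

theory Submission
  imports Defs
begin

(* Write h x = g (a * x) with g t = A cosh t cos t - B sinh t sin t. At a critical point t of g
   the equation g' t = 0 fixes the ratio of A and B; eliminating it gives
   g(t)^2 = (A^2 + B^2) / 4 * peak_ratio (2 |t|) for t \<noteq> 0, where
   peak_ratio y = (sin y + sinh y)^2 / (cosh y - cos y) is strictly increasing on (0, \<infinity>) and
   exceeds 4 there. As g(0)^2 = A^2 \<le> A^2 + B^2, |g| strictly increases along the critical points
   ordered by |t|. The same elimination shows g'' t \<noteq> 0 at critical points t \<noteq> 0, so these are
   isolated; at t = 0 we have g'' 0 = -2 B, and if B = 0 then g' t = A (sinh t cos t - cosh t sin t)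
   has no zero with 0 < |t| < pi. *)

lemma DERIV_pos_interior_imp_less:
  fixes f f' :: "real \<Rightarrow> real"
  assumes "a < b"
    and "\<And>x. a \<le> x \<Longrightarrow> x \<le> b \<Longrightarrow> (f has_real_derivative f' x) (at x)"
    and "\<And>x. a < x \<Longrightarrow> x < b \<Longrightarrow> 0 < f' x"
  shows "f a < f b"
proof (rule DERIV_pos_imp_increasing_open[OF \<open>a < b\<close>])
  show "\<exists>y. (f has_real_derivative y) (at x) \<and> 0 < y" if "a < x" "x < b" for x
    using that by (intro exI[of _ "f' x"] conjI assms(2,3)) auto
  show "continuous_on {a..b} f"
    using assms(2) by (intro continuous_at_imp_continuous_on ballI DERIV_isCont) auto
qed

lemma cos_less_cosh:
  fixes y :: real
  assumes "y \<noteq> 0"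
  shows "cos y < cosh y"
  using cos_le_one[of y] cosh_real_ge_1[of y] cosh_real_one_iff[of y] assms by linarith

lemma sin_less_sinh:
  fixes y :: real
  assumes "0 < y"
  shows "sin y < sinh y"
proof -
  have "(\<lambda>z. sinh z - sin z) 0 < (\<lambda>z. sinh z - sin z) y"
    by (rule DERIV_pos_interior_imp_less[OF assms, where f' = "\<lambda>z. cosh z - cos z"])
      (auto intro!: derivative_eq_intros cos_less_cosh)
  then show ?thesis by simp
qed

lemma cos_plus_cosh_gt_2:
  fixes y :: real
  assumes "0 < y"
  shows "2 < cos y + cosh y"
proof -
  have "(\<lambda>z. cos z + cosh z) 0 < (\<lambda>z. cos z + cosh z) y"
    by (rule DERIV_pos_interior_imp_less[OF assms, where f' = "\<lambda>z. sinh z - sin z"])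
      (auto intro!: derivative_eq_intros sin_less_sinh)
  then show ?thesis by simp
qed

lemma sin_plus_sinh_pos:
  fixes y :: real
  assumes "0 < y"
  shows "0 < sin y + sinh y"
proof -
  have "(\<lambda>z. sin z + sinh z) 0 < (\<lambda>z. sin z + sinh z) y"
    by (rule DERIV_pos_interior_imp_less[OF assms, where f' = "\<lambda>z. cos z + cosh z"])
      (auto intro!: derivative_eq_intros dest: cos_plus_cosh_gt_2)
  then show ?thesis by simp
qed

lemma cosh_minus_cos_less_sin_plus_sinh_sq:
  fixes y :: real
  assumes "0 < y"
  shows "4 * (cosh y - cos y) < (sin y + sinh y)\<^sup>2"
proof -
  let ?f = "\<lambda>z. (sin z + sinh z)\<^sup>2 - 4 * (cosh z - cos z)"
  have "?f 0 < ?f y"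
  proof (rule DERIV_pos_interior_imp_less[OF assms])
    show "(?f has_real_derivative 2 * (sin x + sinh x) * (cos x + cosh x - 2)) (at x)" for x
      by (auto intro!: derivative_eq_intros simp: algebra_simps)
    show "0 < 2 * (sin x + sinh x) * (cos x + cosh x - 2)" if "0 < x" for x :: real
      using sin_plus_sinh_pos[OF that] cos_plus_cosh_gt_2[OF that] by simp
  qed
  then show ?thesis by simp
qed

lemma sinh_cos_less_cosh_sin:
  fixes t :: real
  assumes "0 < t" "t < pi"
  shows "sinh t * cos t < cosh t * sin t"
proof -
  let ?f = "\<lambda>z. cosh z * sin z - sinh z * cos z"
  have "?f 0 < ?f t"
    by (rule DERIV_pos_interior_imp_less[OF assms(1), where f' = "\<lambda>z. 2 * sinh z * sin z"])
      (use assms(2) in \<open>auto intro!: derivative_eq_intros mult_pos_pos sin_gt_zero simp: algebra_simps\<close>)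
  then show ?thesis by simp
qed

definition peak_ratio :: "real \<Rightarrow> real" where
  "peak_ratio y = (sin y + sinh y)\<^sup>2 / (cosh y - cos y)"

lemma peak_ratio_minus [simp]: "peak_ratio (- y) = peak_ratio y"
  unfolding peak_ratio_def by (simp add: power2_eq_square algebra_simps)

lemma peak_ratio_gt_4:
  assumes "0 < y"
  shows "4 < peak_ratio y"
  using cos_less_cosh[of y] cosh_minus_cos_less_sin_plus_sinh_sq[OF assms] assms
  by (simp add: peak_ratio_def field_simps)

lemma strict_mono_on_peak_ratio: "strict_mono_on {0<..} peak_ratio"
proof (rule strict_mono_onI)
  fix y1 y2 :: real
  assume "y1 \<in> {0<..}" "y1 < y2"
  then have "0 < y1" by simp
  show "peak_ratio y1 < peak_ratio y2"
  proof (rule DERIV_pos_interior_imp_less[OF \<open>y1 < y2\<close>])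
    fix x assume "y1 \<le> x"
    then have "cosh x - cos x \<noteq> 0"
      using cos_less_cosh[of x] \<open>0 < y1\<close> by auto
    then have "(peak_ratio has_real_derivative
        (2 * (sin x + sinh x) * (cos x + cosh x) * (cosh x - cos x) - (sin x + sinh x)\<^sup>2 * (sinh x + sin x))
          / (cosh x - cos x)\<^sup>2) (at x)"
      unfolding peak_ratio_def
      by (auto intro!: derivative_eq_intros simp: power2_eq_square algebra_simps)
    moreover have "2 * (sin x + sinh x) * (cos x + cosh x) * (cosh x - cos x) - (sin x + sinh x)\<^sup>2 * (sinh x + sin x)
        = (sin x + sinh x) * (sinh x - sin x)\<^sup>2"
      using sin_cos_squared_add[of x] cosh_square_eq[of x] by algebra
    ultimately show "(peak_ratio has_real_derivative
        (sin x + sinh x) * (sinh x - sin x)\<^sup>2 / (cosh x - cos x)\<^sup>2) (at x)"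
      by simp
  next
    fix x assume "y1 < x"
    then have "0 < x" using \<open>0 < y1\<close> by simp
    then show "0 < (sin x + sinh x) * (sinh x - sin x)\<^sup>2 / (cosh x - cos x)\<^sup>2"
      using sin_plus_sinh_pos[of x] sin_less_sinh[of x] cos_less_cosh[of x] by simp
  qed
qed

definition hyptrig :: "real \<Rightarrow> real \<Rightarrow> real \<Rightarrow> real" where
  "hyptrig A B t = A * cosh t * cos t - B * sinh t * sin t"

definition hyptrig_deriv :: "real \<Rightarrow> real \<Rightarrow> real \<Rightarrow> real" where
  "hyptrig_deriv A B t = (A - B) * sinh t * cos t - (A + B) * cosh t * sin t"

lemma hyptrig_has_derivative: "(hyptrig A B has_real_derivative hyptrig_deriv A B t) (at t)"
  unfolding hyptrig_def hyptrig_deriv_def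
  by (auto intro!: derivative_eq_intros simp: algebra_simps)

lemma hyptrig_deriv_has_derivative:
  "(hyptrig_deriv A B has_real_derivative - 2 * (B * cosh t * cos t + A * sinh t * sin t)) (at t)"
  unfolding hyptrig_deriv_def
  by (auto intro!: derivative_eq_intros simp: algebra_simps)

lemma hyptrig_critical_value_identity:
  assumes "hyptrig_deriv A B t = 0"
  shows "(cosh (2 * t) - cos (2 * t)) * (hyptrig A B t)\<^sup>2
    = (A\<^sup>2 + B\<^sup>2) * (sin (2 * t) + sinh (2 * t))\<^sup>2 / 4"
  using assms sin_cos_squared_add[of t] cosh_square_eq[of t]
  unfolding hyptrig_def hyptrig_deriv_def cosh_double cos_double sin_double sinh_double
  by algebra

lemma hyptrig_critical_curvature_identity:
  assumes "hyptrig_deriv A B t = 0"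
  shows "(cosh (2 * t) - cos (2 * t)) * (B * cosh t * cos t + A * sinh t * sin t)\<^sup>2
    = (A\<^sup>2 + B\<^sup>2) * (sinh (2 * t) - sin (2 * t))\<^sup>2 / 4"
  using assms sin_cos_squared_add[of t] cosh_square_eq[of t]
  unfolding hyptrig_deriv_def cosh_double cos_double sin_double sinh_double
  by algebra

lemma hyptrig_critical_value_sq:
  assumes "hyptrig_deriv A B t = 0" "t \<noteq> 0"
  shows "(hyptrig A B t)\<^sup>2 = (A\<^sup>2 + B\<^sup>2) * peak_ratio (2 * \<bar>t\<bar>) / 4"
proof -
  have "cos (2 * t) < cosh (2 * t)"
    using cos_less_cosh assms(2) by simp
  then have "(hyptrig A B t)\<^sup>2 = (A\<^sup>2 + B\<^sup>2) * peak_ratio (2 * t) / 4"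
    using hyptrig_critical_value_identity[OF assms(1)] by (simp add: peak_ratio_def field_simps)
  then show ?thesis
    by (cases "0 \<le> t") simp_all
qed

lemma hyptrig_critical_value_sq_less:
  assumes "A \<noteq> 0 \<or> B \<noteq> 0" "hyptrig_deriv A B s = 0" "hyptrig_deriv A B t = 0" "\<bar>s\<bar> < \<bar>t\<bar>"
  shows "(hyptrig A B s)\<^sup>2 < (hyptrig A B t)\<^sup>2"
proof -
  have AB: "0 < A\<^sup>2 + B\<^sup>2"
    using assms(1) by (simp add: sum_power2_gt_zero_iff)
  have t: "(hyptrig A B t)\<^sup>2 = (A\<^sup>2 + B\<^sup>2) * peak_ratio (2 * \<bar>t\<bar>) / 4"
    using hyptrig_critical_value_sq[OF assms(3)] assms(4) by auto
  show ?thesis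
  proof (cases "s = 0")
    case True
    then have "(hyptrig A B s)\<^sup>2 \<le> A\<^sup>2 + B\<^sup>2"
      by (simp add: hyptrig_def)
    also have "\<dots> < (A\<^sup>2 + B\<^sup>2) * peak_ratio (2 * \<bar>t\<bar>) / 4"
    proof -
      have "4 < peak_ratio (2 * \<bar>t\<bar>)"
        using peak_ratio_gt_4 assms(4) by simp
      from mult_strict_left_mono[OF this AB] show ?thesis
        by (simp add: field_simps)
    qed
    finally show ?thesis
      using t by simp
  next
    case False
    have "peak_ratio (2 * \<bar>s\<bar>) < peak_ratio (2 * \<bar>t\<bar>)"
      using strict_mono_onD[OF strict_mono_on_peak_ratio] False assms(4) by simp
    from mult_strict_left_mono[OF this AB] show ?thesis
      using hyptrig_critical_value_sq[OF assms(2) False] t by linarith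
  qed
qed

lemma DERIV_nonzero_imp_eventually_neq:
  fixes f :: "'a::real_normed_field \<Rightarrow> 'a"
  assumes "(f has_field_derivative l) (at x)" "l \<noteq> 0"
  shows "\<forall>\<^sub>F y in at x. f y \<noteq> f x"
proof -
  have "((\<lambda>y. (f y - f x) / (y - x)) \<longlongrightarrow> l) (at x)"
    using assms(1) by (simp add: has_field_derivative_iff)
  then have "\<forall>\<^sub>F y in at x. (f y - f x) / (y - x) \<noteq> 0"
    using assms(2) by (rule tendsto_imp_eventually_ne)
  then show ?thesis
    by (rule eventually_mono) auto
qed

lemma hyptrig_critical_point_nondegenerate:
  assumes "A \<noteq> 0 \<or> B \<noteq> 0" "hyptrig_deriv A B t = 0" "t \<noteq> 0 \<or> B \<noteq> 0"
  shows "B * cosh t * cos t + A * sinh t * sin t \<noteq> 0"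
proof (cases "t = 0")
  case False
  have "sin (2 * \<bar>t\<bar>) < sinh (2 * \<bar>t\<bar>)"
    using sin_less_sinh False by simp
  then have "sinh (2 * t) - sin (2 * t) \<noteq> 0"
    by (cases "0 \<le> t") auto
  moreover have "0 < A\<^sup>2 + B\<^sup>2"
    using assms(1) by (simp add: sum_power2_gt_zero_iff)
  ultimately show ?thesis
    using hyptrig_critical_curvature_identity[OF assms(2)] by auto
qed (use assms(3) in simp)

lemma hyptrig_deriv_zero_isolated:
  assumes "A \<noteq> 0 \<or> B \<noteq> 0" "hyptrig_deriv A B t = 0"
  shows "\<forall>\<^sub>F s in at t. hyptrig_deriv A B s \<noteq> 0"
proof (cases "t = 0 \<and> B = 0")
  case True
  then have "A \<noteq> 0"
    using assms(1) by simp
  have "hyptrig_deriv A B s \<noteq> 0" if "0 < \<bar>s\<bar>" "\<bar>s\<bar> < pi" for s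
  proof -
    have "sinh \<bar>s\<bar> * cos \<bar>s\<bar> < cosh \<bar>s\<bar> * sin \<bar>s\<bar>"
      using sinh_cos_less_cosh_sin[of "\<bar>s\<bar>"] that by blast
    then have "sinh s * cos s \<noteq> cosh s * sin s"
      by (cases "0 \<le> s") auto
    then show ?thesis
      using True \<open>A \<noteq> 0\<close> by (simp add: hyptrig_deriv_def algebra_simps)
  qed
  then show ?thesis
    using True unfolding eventually_at by (intro exI[of _ pi]) (auto simp: dist_real_def)
next
  case False
  then have "B * cosh t * cos t + A * sinh t * sin t \<noteq> 0"
    using hyptrig_critical_point_nondegenerate[OF assms] by blast
  then have "- 2 * (B * cosh t * cos t + A * sinh t * sin t) \<noteq> 0"
    by (intro no_zero_divisors) simp_all
  from DERIV_nonzero_imp_eventually_neq[OF hyptrig_deriv_has_derivative this] show ?thesis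
    using assms(2) by simp
qed

lemma local_extremum_point_DERIV_zero:
  assumes "local_extremum_point f x" "(f has_real_derivative l) (at x)"
  shows "l = 0"
  using assms(1) DERIV_local_max[OF assms(2)] DERIV_local_min[OF assms(2)]
  unfolding local_extremum_point_def local_max_point_def local_min_point_def
  by (metis abs_minus_commute)

lemma eventually_at_scaled:
  fixes c x :: "'a::real_normed_field"
  assumes "c \<noteq> 0" "\<forall>\<^sub>F s in at (c * x). P s"
  shows "\<forall>\<^sub>F y in at x. P (c * y)"
proof -
  have "filterlim (\<lambda>y. c * y) (at (c * x)) (at x)"
  proof (rule filterlim_atI)
    show "((\<lambda>y. c * y) \<longlongrightarrow> c * x) (at x)"
      by (intro tendsto_intros)
    show "\<forall>\<^sub>F y in at x. c * y \<noteq> c * x"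
      using assms(1) by (auto simp: eventually_at_filter)
  qed
  then show ?thesis
    by (rule eventually_compose_filterlim[OF assms(2)])
qed

theorem propositionC2:
  fixes a A B :: real and h :: "real \<Rightarrow> real"
  assumes "a \<noteq> 0" and "A \<noteq> 0 \<or> B \<noteq> 0"
    and "\<And>x. h x = A * cosh (a * x) * cos (a * x) - B * sinh (a * x) * sin (a * x)"
  shows "(\<forall>x. local_extremum_point h x \<longrightarrow>
            (\<exists>e>0. \<forall>y. local_extremum_point h y \<and> \<bar>y - x\<bar> < e \<longrightarrow> y = x))
       \<and> (\<forall>x1 x2. 0 \<le> x1 \<and> x1 < x2 \<and> local_extremum_point h x1 \<and> local_extremum_point h x2
            \<longrightarrow> \<bar>h x1\<bar> < \<bar>h x2\<bar>)"
proof -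
  have h_eq: "h = (\<lambda>x. hyptrig A B (a * x))"
    using assms(3) by (simp add: fun_eq_iff hyptrig_def)
  have crit: "hyptrig_deriv A B (a * x) = 0" if "local_extremum_point h x" for x
  proof -
    have "(h has_real_derivative hyptrig_deriv A B (a * x) * a) (at x)"
      unfolding h_eq by (rule DERIV_chain2[OF hyptrig_has_derivative]) (auto intro!: derivative_eq_intros)
    then have "hyptrig_deriv A B (a * x) * a = 0"
      by (rule local_extremum_point_DERIV_zero[OF that])
    then show ?thesis
      using assms(1) by simp
  qed
  show ?thesis
  proof (intro conjI allI impI)
    fix x assume "local_extremum_point h x"
    then have "\<forall>\<^sub>F s in at (a * x). hyptrig_deriv A B s \<noteq> 0"
      using hyptrig_deriv_zero_isolated[OF assms(2)] crit by blast
    then have "\<forall>\<^sub>F y in at x. hyptrig_deriv A B (a * y) \<noteq> 0"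
      by (rule eventually_at_scaled[OF assms(1)])
    then show "\<exists>e>0. \<forall>y. local_extremum_point h y \<and> \<bar>y - x\<bar> < e \<longrightarrow> y = x"
      using crit unfolding eventually_at dist_real_def by blast
  next
    fix x1 x2
    assume x12: "0 \<le> x1 \<and> x1 < x2 \<and> local_extremum_point h x1 \<and> local_extremum_point h x2"
    then have "\<bar>a * x1\<bar> < \<bar>a * x2\<bar>"
      using assms(1) by (simp add: abs_mult)
    then have "(h x1)\<^sup>2 < (h x2)\<^sup>2"
      using hyptrig_critical_value_sq_less[OF assms(2)] crit x12 h_eq by simp
    then show "\<bar>h x1\<bar> < \<bar>h x2\<bar>"
      by (simp add: power2_less_imp_less)
  qed
qed

end
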